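(* For all non-product distributions $P(A,B)$, the matrices $\mathbf{P}(A|B)\,\mathbf{P}(B|A)$ and $\mathbf{P}(B|A)\,\mathbf{P}(A|B)$ are equal to the identities of size $N_A$ and $N_B$ respectively.
   Context: Let $A$ and $B$ be random variables taking values $a_1,\ldots,a_{N_A}$ and $b_1,\ldots,b_{N_B}$. Probability is axiomatized over ordered sequences rather than sets: for each ordering of the variables there is a real-valued (not necessarily non-negative) joint probability, $P(a_i,b_j)$ for the ordering in which $B$ precedes $A$ and $P(b_j,a_i)$ for the ordering in which $A$ precedes $B$; for each ordering the probabilities are additive and sum to $1$, and the marginals do not depend on the ordering, i.e. $\sum_j P(a_i,b_j)=P(a_i)=\sum_j P(b_j,a_i)$ (and similarly for $P(b_j)$). Conditional probabilities are defined by $P(a_i|b_j)=P(a_i,b_j)/P(b_j)$ and $P(b_j|a_i)=P(b_j,a_i)/P(a_i)$, and $\mathbf{P}(A|B)$ denotes the $N_A\times N_B$ matrix with entries $P(a_i|b_j)$ (similarly $\mathbf{P}(B|A)$), while $\vec{P}(A)$, $\vec{P}(B)$ denote the marginal vectors. In addition the following inference axiom is imposed: $\mathbf{P}(A|B)$ and $\mathbf{P}(B|A)$ may be specified independently of $\vec{P}(B)$ and $\vec{P}(A)$. It is assumed that $\mathbf{P}(A|B)$ is invertible. *)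

theory Defs
  imports "HOL-Analysis.Analysis"
begin

text \<open>PAB a b is P(a_i,b_j) (ordering in which
B precedes A), PBA b a is P(b_j,a_i) (ordering in which A precedes B).  Values are
real, not necessarily non-negative; each ordering sums to 1 and marginals agree.\<close>

definition margA :: "('a::finite \<Rightarrow> 'b::finite \<Rightarrow> real) \<Rightarrow> 'a \<Rightarrow> real" where
  "margA PAB a = (\<Sum>b\<in>UNIV. PAB a b)"

definition margB :: "('a::finite \<Rightarrow> 'b::finite \<Rightarrow> real) \<Rightarrow> 'b \<Rightarrow> real" where
  "margB PAB b = (\<Sum>a\<in>UNIV. PAB a b)"

definition ordered_dist ::
  "('a::finite \<Rightarrow> 'b::finite \<Rightarrow> real) \<Rightarrow> ('b \<Rightarrow> 'a \<Rightarrow> real) \<Rightarrow> bool" where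
  "ordered_dist PAB PBA \<longleftrightarrow>
     (\<Sum>a\<in>UNIV. \<Sum>b\<in>UNIV. PAB a b) = 1 \<and>
     (\<Sum>b\<in>UNIV. \<Sum>a\<in>UNIV. PBA b a) = 1 \<and>
     (\<forall>a. (\<Sum>b\<in>UNIV. PAB a b) = (\<Sum>b\<in>UNIV. PBA b a)) \<and>
     (\<forall>b. (\<Sum>a\<in>UNIV. PAB a b) = (\<Sum>a\<in>UNIV. PBA b a))"

definition condAB :: "('a::finite \<Rightarrow> 'b::finite \<Rightarrow> real) \<Rightarrow> real^'b^'a" where
  "condAB PAB = (\<chi> a b. PAB a b / margB PAB b)"

definition condBA :: "('b::finite \<Rightarrow> 'a::finite \<Rightarrow> real) \<Rightarrow> real^'a^'b" where
  "condBA PBA = (\<chi> b a. PBA b a / (\<Sum>b'\<in>UNIV. PBA b' a))"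

definition product_dist ::
  "('a::finite \<Rightarrow> 'b::finite \<Rightarrow> real) \<Rightarrow> ('b \<Rightarrow> 'a \<Rightarrow> real) \<Rightarrow> bool" where
  "product_dist PAB PBA \<longleftrightarrow>
     (\<forall>a b. PAB a b = margA PAB a * margB PAB b) \<and>
     (\<forall>a b. PBA b a = margB PAB b * margA PAB a)"

text \<open>Inference axiom: the conditional matrices M = P(A|B) and K = P(B|A) can be specified
independently of the marginals: for every admissible marginal P(B) (resp. P(A)), i.e. one
summing to 1 with all marginals nonzero so that the conditionals are defined, there is a
distribution having exactly these conditionals and that marginal.\<close>

definition inference_axiom :: "real^'b^'a \<Rightarrow> real^'a^'b \<Rightarrow> bool" where
  "inference_axiom M K \<longleftrightarrow>
     (\<forall>q::'b \<Rightarrow> real. sum q UNIV = 1 \<and> (\<forall>b. q b \<noteq> 0) \<and>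
        (\<forall>a. (\<Sum>b\<in>UNIV. M $ a $ b * q b) \<noteq> 0) \<longrightarrow>
        (\<exists>PAB PBA. ordered_dist PAB PBA \<and> (\<forall>b. margB PAB b = q b) \<and>
           condAB PAB = M \<and> condBA PBA = K)) \<and>
     (\<forall>p::'a \<Rightarrow> real. sum p UNIV = 1 \<and> (\<forall>a. p a \<noteq> 0) \<and>
        (\<forall>b. (\<Sum>a\<in>UNIV. K $ b $ a * p a) \<noteq> 0) \<longrightarrow>
        (\<exists>PAB PBA. ordered_dist PAB PBA \<and> (\<forall>a. margA PAB a = p a) \<and>
           condAB PAB = M \<and> condBA PBA = K))"

end

theory Submission
  imports Defs
begin

text \<open>By the inference axiom, every admissible marginal \<open>q\<close> of \<open>B\<close> is the marginal of some
distribution with conditionals \<open>M = P(A|B)\<close> and \<open>K = P(B|A)\<close>; passing from \<open>q\<close> to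
\<open>P(A) = M q\<close> and back shows \<open>K M q = q\<close>. Admissibility only excludes finitely many values of
\<open>t\<close> on every line \<open>q\<^sub>0 + t v\<close> through the actual marginal \<open>q\<^sub>0\<close> in the direction of a zero-sum
vector \<open>v\<close>, so \<open>K M\<close> fixes \<open>q\<^sub>0\<close> and every zero-sum vector, and these span.
Hence \<open>K M = 1\<close>, and as \<open>M\<close> is invertible, \<open>K = M\<^sup>-\<^sup>1\<close>.\<close>

lemma inference_axiom_fixes_admissible_marginal:
  fixes M :: "real^'b::finite^'a::finite" and K :: "real^'a^'b" and q :: "real^'b"
  assumes ax: "inference_axiom M K"
    and sum_q: "sum (($) q) UNIV = 1" and q_nonzero: "\<forall>b. q $ b \<noteq> 0"
    and Mq_nonzero: "\<forall>a. (M *v q) $ a \<noteq> 0"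
  shows "(K ** M) *v q = q"
proof -
  from ax sum_q q_nonzero Mq_nonzero obtain PAB :: "'a \<Rightarrow> 'b \<Rightarrow> real" and PBA where
    od: "ordered_dist PAB PBA" and margB: "\<forall>b. margB PAB b = q $ b"
    and cA: "condAB PAB = M" and cB: "condBA PBA = K"
    unfolding inference_axiom_def by (auto simp: matrix_vector_mult_def)
  have PAB: "PAB a b = M $ a $ b * q $ b" for a b
    using cA margB q_nonzero by (auto simp: condAB_def)
  have margA: "(\<Sum>b'\<in>UNIV. PBA b' a) = (M *v q) $ a" for a
    using od by (simp add: ordered_dist_def matrix_vector_mult_def PAB)
  have PBA: "PBA b a = K $ b $ a * (M *v q) $ a" for a b
    using cB margA Mq_nonzero by (auto simp: condBA_def)
  have "(K *v (M *v q)) $ b = q $ b" for b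
  proof -
    have "(K *v (M *v q)) $ b = (\<Sum>a\<in>UNIV. PBA b a)"
      by (simp add: matrix_vector_mult_def PBA)
    also have "\<dots> = q $ b"
      using od margB by (simp add: ordered_dist_def margB_def)
    finally show ?thesis .
  qed
  then have "K *v (M *v q) = q"
    by (simp add: vec_eq_iff)
  then show ?thesis
    by (simp add: matrix_vector_mul_assoc)
qed

lemma ex_nonzero_avoiding_affine_roots:
  fixes F :: "(real \<times> real) set"
  assumes "finite F" and "\<forall>(\<alpha>, \<beta>)\<in>F. \<alpha> \<noteq> 0"
  shows "\<exists>t. t \<noteq> 0 \<and> (\<forall>(\<alpha>, \<beta>)\<in>F. \<alpha> + t * \<beta> \<noteq> 0)"
proof -
  have root: "t = - \<alpha> / \<beta>" if "(\<alpha>, \<beta>) \<in> F" and "\<alpha> + t * \<beta> = 0" for t \<alpha> \<beta>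
  proof -
    have "\<beta> \<noteq> 0" using that assms(2) by auto
    with that(2) show ?thesis by (simp add: field_simps)
  qed
  have "finite (insert 0 ((\<lambda>(\<alpha>, \<beta>). - \<alpha> / \<beta>) ` F))"
    using assms(1) by simp
  then obtain t where t: "t \<notin> insert 0 ((\<lambda>(\<alpha>, \<beta>). - \<alpha> / \<beta>) ` F)"
    using ex_new_if_finite[OF infinite_UNIV_char_0] by blast
  have "\<alpha> + t * \<beta> \<noteq> 0" if "(\<alpha>, \<beta>) \<in> F" for \<alpha> \<beta>
    using t root[OF that] that by force
  with t show ?thesis by auto
qed

lemma inference_axiom_fixes_zero_sum_vector:
  fixes M :: "real^'b::finite^'a::finite" and K :: "real^'a^'b" and q v :: "real^'b"
  assumes ax: "inference_axiom M K"
    and sum_q: "sum (($) q) UNIV = 1" and q_nonzero: "\<forall>b. q $ b \<noteq> 0"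
    and Mq_nonzero: "\<forall>a. (M *v q) $ a \<noteq> 0"
    and sum_v: "sum (($) v) UNIV = 0"
  shows "(K ** M) *v v = v"
proof -
  let ?F = "range (\<lambda>b. (q $ b, v $ b)) \<union> range (\<lambda>a. ((M *v q) $ a, (M *v v) $ a))"
  have "finite ?F" by simp
  moreover have "\<forall>(\<alpha>, \<beta>)\<in>?F. \<alpha> \<noteq> 0"
    using q_nonzero Mq_nonzero by auto
  ultimately obtain t where "t \<noteq> 0" and t: "\<forall>(\<alpha>, \<beta>)\<in>?F. \<alpha> + t * \<beta> \<noteq> 0"
    using ex_nonzero_avoiding_affine_roots by blast
  have "(K ** M) *v (q + t *\<^sub>R v) = q + t *\<^sub>R v"
  proof (rule inference_axiom_fixes_admissible_marginal[OF ax])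
    show "sum (($) (q + t *\<^sub>R v)) UNIV = 1"
      using sum_q sum_v by (simp add: sum.distrib sum_distrib_left[symmetric])
    show "\<forall>b. (q + t *\<^sub>R v) $ b \<noteq> 0" and "\<forall>a. (M *v (q + t *\<^sub>R v)) $ a \<noteq> 0"
      using t by (auto simp: matrix_vector_right_distrib matrix_vector_mult_scaleR)
  qed
  moreover have "(K ** M) *v q = q"
    using inference_axiom_fixes_admissible_marginal[OF ax sum_q q_nonzero Mq_nonzero] .
  ultimately have "t *\<^sub>R ((K ** M) *v v) = t *\<^sub>R v"
    by (simp add: matrix_vector_right_distrib matrix_vector_mult_scaleR)
  with \<open>t \<noteq> 0\<close> show ?thesis by simp
qed

lemma matrix_eq_mat_1_if_fixes_point_and_zero_sum_vectors:
  fixes A :: "real^'n::finite^'n" and q :: "real^'n"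
  assumes sum_q: "sum (($) q) UNIV = 1" and fix_q: "A *v q = q"
    and fix_zero_sum: "\<And>v. sum (($) v) UNIV = 0 \<Longrightarrow> A *v v = v"
  shows "A = mat 1"
proof (rule matrix_eq[THEN iffD2], intro allI)
  fix x :: "real^'n"
  define s where "s = sum (($) x) UNIV"
  have "sum (($) (x - s *\<^sub>R q)) UNIV = 0"
    using sum_q by (simp add: s_def sum_subtractf sum_distrib_left[symmetric])
  then have "A *v (x - s *\<^sub>R q) = x - s *\<^sub>R q"
    by (rule fix_zero_sum)
  then show "A *v x = mat 1 *v x"
    using fix_q by (simp add: matrix_vector_mult_diff_distrib matrix_vector_mult_scaleR)
qed

lemma left_inverse_of_invertible_is_right_inverse:
  fixes M :: "'r::semiring_1^'m::finite^'n::finite" and K :: "'r^'n^'m"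
  assumes "invertible M" and KM: "K ** M = mat 1"
  shows "M ** K = mat 1"
proof -
  from assms(1) obtain M' where M': "M ** M' = mat 1" "M' ** M = mat 1"
    unfolding invertible_def by blast
  have "K = K ** (M ** M')" by (simp add: M'(1))
  also have "\<dots> = (K ** M) ** M'" by (simp add: matrix_mul_assoc)
  also have "\<dots> = M'" by (simp add: KM)
  finally show ?thesis using M'(1) by simp
qed

theorem theorem1:
  fixes PAB :: "'a::finite \<Rightarrow> 'b::finite \<Rightarrow> real" and PBA :: "'b \<Rightarrow> 'a \<Rightarrow> real"
  assumes "ordered_dist PAB PBA"
    and "\<forall>a. margA PAB a \<noteq> 0" and "\<forall>b. margB PAB b \<noteq> 0"
    and "\<not> product_dist PAB PBA"
    and "invertible (condAB PAB)"
    and "inference_axiom (condAB PAB) (condBA PBA)"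
  shows "condAB PAB ** condBA PBA = mat 1 \<and> condBA PBA ** condAB PAB = mat 1"
proof -
  define q where "q = (\<chi> b. margB PAB b)"
  have "sum (($) q) UNIV = (\<Sum>b\<in>UNIV. \<Sum>a\<in>UNIV. PAB a b)"
    by (simp add: q_def margB_def)
  also have "\<dots> = (\<Sum>a\<in>UNIV. \<Sum>b\<in>UNIV. PAB a b)"
    by (rule sum.swap)
  also have "\<dots> = 1"
    using assms(1) unfolding ordered_dist_def by blast
  finally have sum_q: "sum (($) q) UNIV = 1" .
  have Mq: "condAB PAB *v q = (\<chi> a. margA PAB a)"
    using assms(3) by (simp add: vec_eq_iff matrix_vector_mult_def condAB_def q_def margA_def)
  have "condBA PBA ** condAB PAB = mat 1"
  proof (rule matrix_eq_mat_1_if_fixes_point_and_zero_sum_vectors[OF sum_q])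
    show "(condBA PBA ** condAB PAB) *v q = q"
      by (rule inference_axiom_fixes_admissible_marginal[OF assms(6) sum_q])
        (use assms(2,3) Mq q_def in auto)
    show "(condBA PBA ** condAB PAB) *v v = v" if "sum (($) v) UNIV = 0" for v
      by (rule inference_axiom_fixes_zero_sum_vector[OF assms(6) sum_q _ _ that])
        (use assms(2,3) Mq q_def in auto)
  qed
  with assms(5) show ?thesis
    using left_inverse_of_invertible_is_right_inverse by blast
qed

end
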